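(* Let $H$ be a $3$-graph for which there is an enumeration $V(H)=\{v_1,\dots,v_n\}$ and a colouring $\phi$ of the pairs $\{v_a,v_b\}$ covered by edges of $H$ with colours red, blue, green such that every edge $\{v_i,v_j,v_k\}\in E(H)$ with $i<j<k$ satisfies $\phi(v_iv_j)=\text{red}$, $\phi(v_iv_k)=\text{blue}$, $\phi(v_jv_k)=\text{green}$. Then every subhypergraph $H'\subseteq H$ satisfies $\delta_{\mathrm{co}}(H')\le 1$.
   Context: A $3$-graph is a $3$-uniform hypergraph. For a $3$-graph $H$ and a $2$-subset $S\subseteq V(H)$, $d_H(S)$ is the number of edges containing $S$, and the minimum codegree $\delta_{\mathrm{co}}(H)$ is the minimum of $d_H(S)$ over all $2$-subsets $S$ of $V(H)$. *)

theory Defs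
  imports Main
begin

definition is_3graph :: "'a set \<Rightarrow> 'a set set \<Rightarrow> bool" where
  "is_3graph V E \<longleftrightarrow> finite V \<and> (\<forall>e\<in>E. e \<subseteq> V \<and> card e = 3)"

definition subhypergraph :: "'a set \<Rightarrow> 'a set set \<Rightarrow> 'a set \<Rightarrow> 'a set set \<Rightarrow> bool" where
  "subhypergraph V' E' V E \<longleftrightarrow> V' \<subseteq> V \<and> E' \<subseteq> E \<and> (\<forall>e\<in>E'. e \<subseteq> V')"

definition codeg :: "'a set set \<Rightarrow> 'a set \<Rightarrow> nat" where
  "codeg E S = card {e \<in> E. S \<subseteq> e}"

text \<open>Minimum codegree over all 2-subsets of V (meaningful when card V \<ge> 2).\<close>
definition min_codeg :: "'a set \<Rightarrow> 'a set set \<Rightarrow> nat" where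
  "min_codeg V E = Min {codeg E S | S. S \<subseteq> V \<and> card S = 2}"

datatype colour = Red | Blue | Green

end

theory Submission
  imports Defs
begin

text \<open>Order the vertices by their index. In every edge the pair avoiding the least vertex is green,
  while the two pairs through the least vertex are red and blue. Hence a green pair {b, c} lies only in
  edges whose third vertex precedes both b and c. Now let a, b be the two first vertices of a
  subhypergraph. Either no edge contains {a, b}, or some edge {a, b, c} does; then c comes after b,
  so {b, c} is green, and the only edge containing {b, c} is {a, b, c}.\<close>

definition ordered_edge_colouring ::
    "('a \<Rightarrow> 'b::linorder) \<Rightarrow> ('a set \<Rightarrow> colour) \<Rightarrow> 'a set set \<Rightarrow> bool" where
  "ordered_edge_colouring r \<phi> E \<longleftrightarrow>
     (\<forall>x y z. {x, y, z} \<in> E \<and> r x < r y \<and> r y < r z \<longrightarrow>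
        \<phi> {x, y} = Red \<and> \<phi> {x, z} = Blue \<and> \<phi> {y, z} = Green)"

lemma ordered_edge_colouringD:
  assumes "ordered_edge_colouring r \<phi> E" "{x, y, z} \<in> E" "r x < r y" "r y < r z"
  shows "\<phi> {x, y} = Red" "\<phi> {x, z} = Blue" "\<phi> {y, z} = Green"
  using assms unfolding ordered_edge_colouring_def by blast+

lemma ordered_edge_colouring_subset:
  "ordered_edge_colouring r \<phi> E \<Longrightarrow> E' \<subseteq> E \<Longrightarrow> ordered_edge_colouring r \<phi> E'"
  unfolding ordered_edge_colouring_def by blast

lemma ordered_edge_colouring_inv_into:
  assumes v: "bij_betw v {1..n} V"
    and E: "\<forall>e\<in>E. e \<subseteq> V"
    and col: "\<forall>i j k. 1 \<le> i \<and> i < j \<and> j < k \<and> k \<le> n \<and> {v i, v j, v k} \<in> E \<longrightarrow>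
                 \<phi> {v i, v j} = Red \<and> \<phi> {v i, v k} = Blue \<and> \<phi> {v j, v k} = Green"
  shows "ordered_edge_colouring (inv_into {1..n} v) \<phi> E"
  unfolding ordered_edge_colouring_def
proof (intro allI impI)
  fix x y z
  let ?w = "inv_into {1..n} v"
  assume xyz: "{x, y, z} \<in> E \<and> ?w x < ?w y \<and> ?w y < ?w z"
  then have V: "x \<in> V" "y \<in> V" "z \<in> V" using E by auto
  have index: "?w u \<in> {1..n}" "v (?w u) = u" if "u \<in> V" for u
    using that v by (auto simp: bij_betw_def inv_into_into f_inv_into_f)
  have "1 \<le> ?w x \<and> ?w x < ?w y \<and> ?w y < ?w z \<and> ?w z \<le> n \<and>
      {v (?w x), v (?w y), v (?w z)} \<in> E"
    using xyz index V by auto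
  from col[rule_format, OF this]
  show "\<phi> {x, y} = Red \<and> \<phi> {x, z} = Blue \<and> \<phi> {y, z} = Green"
    using index(2) V by simp
qed

lemma pair_through_least_vertex_not_green:
  assumes col: "ordered_edge_colouring r \<phi> E"
    and edge: "{x, y, z} \<in> E" and "r x < r y" "r x < r z" "r y \<noteq> r z"
  shows "\<phi> {x, y} \<noteq> Green"
proof (cases "r y < r z")
  case True
  then show ?thesis using ordered_edge_colouringD(1)[OF col edge \<open>r x < r y\<close>] by simp
next
  case False
  then have "r z < r y" using \<open>r y \<noteq> r z\<close> by simp
  moreover have "{x, z, y} \<in> E" using edge by (simp add: insert_commute)
  ultimately show ?thesis using ordered_edge_colouringD(2)[OF col _ \<open>r x < r z\<close>] by simp
qed

lemma green_pair_third_vertex_below: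
  assumes col: "ordered_edge_colouring r \<phi> E"
    and edge: "{x, y, z} \<in> E" and "r x \<noteq> r y" "r x \<noteq> r z" "r y \<noteq> r z"
    and green: "\<phi> {y, z} = Green"
  shows "r x < r y \<and> r x < r z"
proof (rule ccontr)
  assume "\<not> (r x < r y \<and> r x < r z)"
  then consider "r y < r z" "r y < r x" | "r z < r y" "r z < r x"
    using assms(3-5) by fastforce
  then show False
  proof cases
    case 1
    have "{y, z, x} \<in> E" using edge by (simp add: insert_commute)
    then show False using pair_through_least_vertex_not_green[OF col _ 1] green assms(4) by auto
  next
    case 2
    have "{z, y, x} \<in> E" using edge by (simp add: insert_commute)
    then show False using pair_through_least_vertex_not_green[OF col _ 2] green assms(3) by (auto simp: insert_commute)
  qed
qed

lemma card_3_third_elementE: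
  assumes "card e = 3" "b \<in> e" "c \<in> e" "b \<noteq> c"
  obtains d where "e = {b, c, d}" "d \<noteq> b" "d \<noteq> c"
proof -
  have "finite e" using assms(1) by (metis card.infinite zero_neq_numeral)
  then have "card (e - {b, c}) = 1" using assms by (simp add: card_Diff_subset)
  then obtain d where d: "e - {b, c} = {d}" by (metis card_1_singletonE)
  then have "e = {b, c, d}" using assms(2,3) by blast
  moreover have "d \<noteq> b" "d \<noteq> c" using d by auto
  ultimately show ?thesis using that by blast
qed

lemma inj_on_least_elementE:
  fixes r :: "'a \<Rightarrow> 'b::linorder"
  assumes "finite A" "A \<noteq> {}" "inj_on r A"
  obtains a where "a \<in> A" "\<And>x. x \<in> A - {a} \<Longrightarrow> r a < r x"
proof -
  have "Min (r ` A) \<in> r ` A" using assms(1,2) by simp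
  then obtain a where a: "a \<in> A" "r a = Min (r ` A)" by (metis imageE)
  have "r a < r x" if x: "x \<in> A - {a}" for x
  proof -
    have "r a \<le> r x" unfolding a(2) using assms(1) x by simp
    moreover have "r x \<noteq> r a" using inj_onD[OF assms(3)] x a(1) by blast
    ultimately show ?thesis by simp
  qed
  then show ?thesis using that a(1) by blast
qed

lemma inj_on_two_least_elementsE:
  fixes r :: "'a \<Rightarrow> 'b::linorder"
  assumes "finite A" "2 \<le> card A" "inj_on r A"
  obtains a b where "a \<in> A" "b \<in> A" "r a < r b" "\<And>x. x \<in> A - {a, b} \<Longrightarrow> r b < r x"
proof -
  have "A \<noteq> {}" using assms(2) by auto
  then obtain a where a: "a \<in> A" "\<And>x. x \<in> A - {a} \<Longrightarrow> r a < r x"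
    using inj_on_least_elementE[OF assms(1) _ assms(3)] by metis
  have "card (A - {a}) \<noteq> 0" using assms(1,2) a(1) by (simp add: card_Diff_singleton)
  then have "A - {a} \<noteq> {}" by (metis card.empty)
  then obtain b where b: "b \<in> A - {a}" "\<And>x. x \<in> A - {a} - {b} \<Longrightarrow> r b < r x"
    using inj_on_least_elementE[OF finite_Diff[OF assms(1)] _ inj_on_diff[OF assms(3)]] by metis
  show ?thesis
  proof (rule that)
    show "a \<in> A" "b \<in> A" using a(1) b(1) by auto
    show "r a < r b" using a(2) b(1) by blast
    show "r b < r x" if "x \<in> A - {a, b}" for x using b(2) that by blast
  qed
qed

lemma min_codeg_le_codeg:
  assumes "finite V" "S \<subseteq> V" "card S = 2"
  shows "min_codeg V E \<le> codeg E S"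
proof -
  have "finite {codeg E S | S. S \<subseteq> V \<and> card S = 2}"
    using assms(1) by (simp add: setcompr_eq_image)
  then show ?thesis unfolding min_codeg_def using assms(2,3) by (intro Min_le) auto
qed

lemma codeg_green_pair_le_1:
  assumes E: "\<forall>e\<in>E. e \<subseteq> V \<and> card e = 3"
    and r: "inj_on r V"
    and col: "ordered_edge_colouring r \<phi> E"
    and green: "\<phi> {b, c} = Green"
    and bc: "b \<in> V" "c \<in> V" "b \<noteq> c"
    and above: "\<And>x. x \<in> V - {a, b} \<Longrightarrow> r b < r x"
  shows "codeg E {b, c} \<le> 1"
proof -
  have "{f \<in> E. {b, c} \<subseteq> f} \<subseteq> {{a, b, c}}"
  proof
    fix f assume f: "f \<in> {f \<in> E. {b, c} \<subseteq> f}"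
    have "card f = 3" "f \<subseteq> V" "b \<in> f" "c \<in> f" using E f by auto
    then obtain d where d: "f = {b, c, d}" "d \<noteq> b" "d \<noteq> c"
      using card_3_third_elementE bc(3) by metis
    have dV: "d \<in> V" using d(1) \<open>f \<subseteq> V\<close> by simp
    have "{d, b, c} \<in> E" using d f by (simp add: insert_commute)
    moreover have "r d \<noteq> r b" "r d \<noteq> r c" "r b \<noteq> r c"
      using inj_on_eq_iff[OF r] d bc dV by auto
    ultimately have "r d < r b"
      using green_pair_third_vertex_below[OF col _ _ _ _ green] by blast
    have "d = a"
    proof (rule ccontr)
      assume "d \<noteq> a"
      then have "r b < r d" using above[of d] dV d(2) by simp
      then show False using \<open>r d < r b\<close> by simp
    qed
    then show "f \<in> {{a, b, c}}" using d by (simp add: insert_commute)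
  qed
  then have "codeg E {b, c} \<le> card {{a, b, c}}"
    unfolding codeg_def by (intro card_mono) simp_all
  then show ?thesis by simp
qed

lemma min_codeg_le_1_if_ordered_edge_colouring:
  assumes V: "finite V" "2 \<le> card V"
    and E: "\<forall>e\<in>E. e \<subseteq> V \<and> card e = 3"
    and r: "inj_on r V"
    and col: "ordered_edge_colouring r \<phi> E"
  shows "min_codeg V E \<le> 1"
proof -
  obtain a b where ab: "a \<in> V" "b \<in> V" "r a < r b"
    and above: "\<And>x. x \<in> V - {a, b} \<Longrightarrow> r b < r x"
    using inj_on_two_least_elementsE[OF V r] by metis
  have "a \<noteq> b" using ab(3) by blast
  show ?thesis
  proof (cases "codeg E {a, b} = 0")
    case True
    moreover have "card {a, b} = 2" using \<open>a \<noteq> b\<close> by simp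
    ultimately show ?thesis using min_codeg_le_codeg[OF V(1), of "{a, b}" E] ab by simp
  next
    case False
    then have "{e \<in> E. {a, b} \<subseteq> e} \<noteq> {}" unfolding codeg_def by (metis card.empty)
    then obtain e where e: "e \<in> E" "a \<in> e" "b \<in> e" by blast
    have "card e = 3" "e \<subseteq> V" using E e(1) by auto
    then obtain c where c: "e = {a, b, c}" "c \<noteq> a" "c \<noteq> b"
      using card_3_third_elementE e(2,3) \<open>a \<noteq> b\<close> by metis
    have cV: "c \<in> V" using c(1) \<open>e \<subseteq> V\<close> by simp
    have "r b < r c" using above[of c] cV c(2,3) by simp
    then have green: "\<phi> {b, c} = Green"
      using ordered_edge_colouringD[OF col _ ab(3)] e(1) c(1) by blast
    have "b \<noteq> c" using c(3) by simp
    with green have "codeg E {b, c} \<le> 1"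
      using codeg_green_pair_le_1[OF E r col _ ab(2) cV _ above] by blast
    moreover have "min_codeg V E \<le> codeg E {b, c}"
      using min_codeg_le_codeg[OF V(1)] ab cV c by simp
    ultimately show ?thesis by simp
  qed
qed

theorem mainTheorem2:
  fixes V :: "'a set" and E :: "'a set set" and n :: nat
    and v :: "nat \<Rightarrow> 'a" and \<phi> :: "'a set \<Rightarrow> colour"
  assumes H: "is_3graph V E"
    and enum: "bij_betw v {1..n} V"
    and col: "\<forall>i j k. 1 \<le> i \<and> i < j \<and> j < k \<and> k \<le> n \<and> {v i, v j, v k} \<in> E \<longrightarrow>
                 \<phi> {v i, v j} = Red \<and> \<phi> {v i, v k} = Blue \<and> \<phi> {v j, v k} = Green"
  shows "\<forall>V' E'. subhypergraph V' E' V E \<and> card V' \<ge> 2 \<longrightarrow> min_codeg V' E' \<le> 1"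
proof (intro allI impI)
  fix V' E'
  assume "subhypergraph V' E' V E \<and> card V' \<ge> 2"
  then have sub: "V' \<subseteq> V" "E' \<subseteq> E" "\<forall>e\<in>E'. e \<subseteq> V'" and "2 \<le> card V'"
    unfolding subhypergraph_def by auto
  have "finite V'" using H sub(1) finite_subset unfolding is_3graph_def by auto
  moreover have "\<forall>e\<in>E'. e \<subseteq> V' \<and> card e = 3" using H sub(2,3) unfolding is_3graph_def by auto
  moreover have "inj_on (inv_into {1..n} v) V'"
    using bij_betw_imp_inj_on[OF bij_betw_inv_into[OF enum]] sub(1) by (rule inj_on_subset)
  moreover have "ordered_edge_colouring (inv_into {1..n} v) \<phi> E'"
    using ordered_edge_colouring_inv_into[OF enum _ col] H sub(2) ordered_edge_colouring_subset
    unfolding is_3graph_def by auto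
  ultimately show "min_codeg V' E' \<le> 1"
    using min_codeg_le_1_if_ordered_edge_colouring \<open>2 \<le> card V'\<close> by metis
qed

end
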